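(* Let $\Sigma$ be a finite alphabet with at least two symbols. Define $\delta:\Sigma^{\mathbb{N}}\times\Sigma^{\mathbb{N}}\to\mathbb{R}$ by $\delta(x,x)=0$ and, for $x\neq y$, $\delta(x,y)=2^{-n}$ where $n$ is the minimal number of states of a Büchi automaton that separates $x$ and $y$. Then: (1) $\delta$ is a distance on $\Sigma^{\mathbb{N}}$; (2) $\delta$ is compatible with the Büchi topology $\tau_B$; (3) $\delta$ is not complete.
   Context: A Büchi automaton is $\mathcal{A}=(\Sigma,Q,Q_i,Q_f,\delta)$ with finite state set $Q$, initial states $Q_i$, final states $Q_f$, transitions $\subseteq Q\times\Sigma\times Q$; a run on $\sigma\in\Sigma^{\mathbb{N}}$ is $(q_n)_n$ with $q_0\in Q_i$ and each $(q_n,\sigma(n),q_{n+1})$ a transition; it is accepting if it visits $Q_f$ infinitely often; $L(\mathcal{A})$ is the set of words with an accepting run; $|\mathcal{A}|=|Q|$. A language is $\omega$-regular if it equals some $L(\mathcal{A})$. $\mathcal{A}$ separates $x$ and $y$ if exactly one of $x,y$ lies in $L(\mathcal{A})$. $\tau_B$ is the topology on $\Sigma^{\mathbb{N}}$ generated by the $\omega$-regular languages. *)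

theory Defs
  imports "HOL-Analysis.Analysis"
begin

record 'a buchi =
  states :: "nat set"
  initial :: "nat set"
  final :: "nat set"
  trans :: "(nat \<times> 'a \<times> nat) set"

definition wf_buchi :: "'a buchi \<Rightarrow> bool" where
  "wf_buchi A \<longleftrightarrow> finite (states A) \<and> initial A \<subseteq> states A \<and> final A \<subseteq> states A
     \<and> trans A \<subseteq> states A \<times> UNIV \<times> states A"

definition run :: "'a buchi \<Rightarrow> (nat \<Rightarrow> 'a) \<Rightarrow> (nat \<Rightarrow> nat) \<Rightarrow> bool" where
  "run A \<sigma> r \<longleftrightarrow> r 0 \<in> initial A \<and> (\<forall>n. (r n, \<sigma> n, r (Suc n)) \<in> trans A)"

definition accepting :: "'a buchi \<Rightarrow> (nat \<Rightarrow> nat) \<Rightarrow> bool" where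
  "accepting A r \<longleftrightarrow> infinite {n. r n \<in> final A}"

definition lang :: "'a buchi \<Rightarrow> (nat \<Rightarrow> 'a) set" where
  "lang A = {\<sigma>. \<exists>r. run A \<sigma> r \<and> accepting A r}"

definition size_buchi :: "'a buchi \<Rightarrow> nat" where
  "size_buchi A = card (states A)"

definition omega_regular :: "(nat \<Rightarrow> 'a) set \<Rightarrow> bool" where
  "omega_regular L \<longleftrightarrow> (\<exists>A. wf_buchi A \<and> lang A = L)"

definition separates :: "'a buchi \<Rightarrow> (nat \<Rightarrow> 'a) \<Rightarrow> (nat \<Rightarrow> 'a) \<Rightarrow> bool" where
  "separates A x y \<longleftrightarrow> (x \<in> lang A \<longleftrightarrow> y \<notin> lang A)"

definition buchi_topology :: "(nat \<Rightarrow> 'a) topology" where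
  "buchi_topology = topology_generated_by {L. omega_regular L}"

definition buchi_dist :: "(nat \<Rightarrow> 'a) \<Rightarrow> (nat \<Rightarrow> 'a) \<Rightarrow> real" where
  "buchi_dist x y = (if x = y then 0
     else 2 powr (- real (LEAST n. \<exists>A. wf_buchi A \<and> separates A x y \<and> size_buchi A = n)))"

end

theory Submission
  imports Defs "HOL-Library.Ramsey" "HOL-Library.Product_Order"
begin

text \<open>
  The distance is an ultrametric, since an automaton separating \<open>x\<close> from \<open>z\<close> separates
  \<open>y\<close> from one of them. A language accepted with \<open>n\<close> states is a union of balls of radius
  \<open>2\<^sup>-\<^sup>n\<close>, so every Buchi-open set is metrically open. Conversely, the ball of radius \<open>2\<^sup>-\<^sup>n\<close>
  around \<open>x\<close> contains the intersection of the finitely many languages accepted with at most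
  \<open>n\<close> states that contain \<open>x\<close> and of the complements of those that do not. Complements of
  \<omega>-regular languages are Buchi-open: by Ramsey's theorem a word \<open>y \<notin> L(A)\<close> splits into
  blocks that all have the same transition profile in \<open>A\<close> after the first one, and the
  words admitting a block factorisation with profiles dominated by these form an
  \<omega>-regular language containing \<open>y\<close> and disjoint from \<open>L(A)\<close>.

  For \<open>a \<noteq> b\<close> the words \<open>a\<^sup>m\<^sup>! b\<^sup>\<omega>\<close> form a Cauchy sequence: the sets of states reachable
  by \<open>a\<^sup>k\<close> in an automaton with \<open>K\<close> states are eventually periodic with period at most \<open>2\<^sup>K\<close>,
  and \<open>m!\<close> is a multiple of that period for \<open>m \<ge> 2\<^sup>K\<close>. Any limit would be separated from
  almost all of its terms by an automaton accepting either \<open>a\<^sup>\<omega>\<close> or the words having a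
  fixed letter at a fixed position.
\<close>

section \<open>Buchi automata over arbitrary state sets\<close>

definition gen_lang :: "'s set \<Rightarrow> 's set \<Rightarrow> ('s \<times> 'a \<times> 's) set \<Rightarrow> (nat \<Rightarrow> 'a) set" where
  "gen_lang I F T =
     {\<sigma>. \<exists>r. r 0 \<in> I \<and> (\<forall>n. (r n, \<sigma> n, r (Suc n)) \<in> T) \<and> infinite {n. r n \<in> F}}"

lemma lang_eq_gen_lang: "lang A = gen_lang (initial A) (final A) (trans A)"
  by (simp add: lang_def gen_lang_def run_def accepting_def)

lemma gen_lang_simulation:
  assumes "\<And>p a q. (p, a, q) \<in> T \<Longrightarrow> (h p, a, h q) \<in> T'" and "h ` I \<subseteq> I'"
    and "\<And>p a q. (p, a, q) \<in> T \<Longrightarrow> p \<in> F \<Longrightarrow> h p \<in> F'"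
  shows "gen_lang I F T \<subseteq> gen_lang I' F' T'"
proof
  fix \<sigma> assume "\<sigma> \<in> gen_lang I F T"
  then obtain r where r: "r 0 \<in> I" "\<And>n. (r n, \<sigma> n, r (Suc n)) \<in> T" "infinite {n. r n \<in> F}"
    by (auto simp: gen_lang_def)
  have "{n. r n \<in> F} \<subseteq> {n. h (r n) \<in> F'}"
    using r(2) assms(3) by blast
  then have "infinite {n. h (r n) \<in> F'}"
    using r(3) finite_subset by blast
  then show "\<sigma> \<in> gen_lang I' F' T'"
    using r assms(1,2) unfolding gen_lang_def by (auto intro!: exI[of _ "h \<circ> r"])
qed

definition rename_buchi ::
    "('s \<Rightarrow> nat) \<Rightarrow> 's set \<Rightarrow> 's set \<Rightarrow> 's set \<Rightarrow> ('s \<times> 'a \<times> 's) set \<Rightarrow> 'a buchi" where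
  "rename_buchi f Q I F T = \<lparr>states = f ` Q, initial = f ` I, final = f ` F,
     trans = (\<lambda>(p, a, q). (f p, a, f q)) ` T\<rparr>"

lemma wf_rename_buchi:
  "finite Q \<Longrightarrow> I \<subseteq> Q \<Longrightarrow> F \<subseteq> Q \<Longrightarrow> T \<subseteq> Q \<times> UNIV \<times> Q \<Longrightarrow> wf_buchi (rename_buchi f Q I F T)"
  unfolding wf_buchi_def rename_buchi_def by auto

lemma lang_rename_buchi:
  assumes "inj_on f Q" "I \<subseteq> Q" "F \<subseteq> Q" "T \<subseteq> Q \<times> UNIV \<times> Q"
  shows "lang (rename_buchi f Q I F T) = gen_lang I F T"
proof -
  let ?T' = "(\<lambda>(p, a, q). (f p, a, f q)) ` T"
  have "gen_lang I F T \<subseteq> gen_lang (f ` I) (f ` F) ?T'"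
    by (rule gen_lang_simulation) (auto intro: rev_image_eqI)
  moreover have "gen_lang (f ` I) (f ` F) ?T' \<subseteq> gen_lang I F T"
  proof (rule gen_lang_simulation[where h = "inv_into Q f"])
    show "inv_into Q f ` f ` I \<subseteq> I"
      using assms(1,2) by auto
  next
    fix p a q assume "(p, a, q) \<in> ?T'"
    then obtain p' q' where "(p', a, q') \<in> T" "p = f p'" "q = f q'"
      by auto
    moreover have "p' \<in> Q" "q' \<in> Q"
      using calculation(1) assms(4) by auto
    ultimately show "(inv_into Q f p, a, inv_into Q f q) \<in> T"
      and "p \<in> f ` F \<Longrightarrow> inv_into Q f p \<in> F"
      using assms(1,3) by (auto simp: inj_on_image_mem_iff)
  qed
  ultimately show ?thesis
    by (simp add: lang_eq_gen_lang rename_buchi_def)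
qed

lemma omega_regular_gen_lang:
  assumes "finite Q" "I \<subseteq> Q" "F \<subseteq> Q" "T \<subseteq> Q \<times> UNIV \<times> Q"
  shows "omega_regular (gen_lang I F T)"
proof -
  obtain f :: "_ \<Rightarrow> nat" where "inj_on f Q"
    using finite_imp_inj_to_nat_seg[OF assms(1)] by blast
  then have "wf_buchi (rename_buchi f Q I F T)" "lang (rename_buchi f Q I F T) = gen_lang I F T"
    using wf_rename_buchi[OF assms] lang_rename_buchi[OF _ assms(2-4)] by auto
  then show ?thesis
    unfolding omega_regular_def by blast
qed

lemma buchi_with_states_lessThan_size:
  assumes "wf_buchi A"
  shows "\<exists>B. wf_buchi B \<and> states B \<subseteq> {..<size_buchi A} \<and> lang B = lang A"
proof -
  have "finite (states A)"
    using assms by (simp add: wf_buchi_def)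
  then obtain f :: "nat \<Rightarrow> nat" and n where f: "f ` states A = {..<n}" "inj_on f (states A)"
    using finite_imp_inj_to_nat_seg by (metis lessThan_def)
  let ?B = "rename_buchi f (states A) (initial A) (final A) (trans A)"
  have "states ?B = {..<size_buchi A}"
    using f by (simp add: rename_buchi_def size_buchi_def) (metis card_image card_lessThan)
  moreover have "wf_buchi ?B"
    using assms by (intro wf_rename_buchi) (auto simp: wf_buchi_def)
  moreover have "lang ?B = lang A"
    unfolding lang_eq_gen_lang[of A] using assms
    by (intro lang_rename_buchi[OF f(2)]) (auto simp: wf_buchi_def)
  ultimately show ?thesis
    by blast
qed

lemma finite_wf_buchi_states_subset:
  assumes "finite X"
  shows "finite {B :: 'a::finite buchi. wf_buchi B \<and> states B \<subseteq> X}"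
proof -
  let ?mk = "\<lambda>(Q, I, F, T). \<lparr>states = Q, initial = I, final = F, trans = T\<rparr> :: 'a buchi"
  have "{B. wf_buchi B \<and> states B \<subseteq> X} \<subseteq> ?mk ` (Pow X \<times> Pow X \<times> Pow X \<times> Pow (X \<times> UNIV \<times> X))"
  proof
    fix B :: "'a buchi" assume "B \<in> {B. wf_buchi B \<and> states B \<subseteq> X}"
    then have "(states B, initial B, final B, trans B) \<in> Pow X \<times> Pow X \<times> Pow X \<times> Pow (X \<times> UNIV \<times> X)"
      by (auto simp: wf_buchi_def)
    then show "B \<in> ?mk ` (Pow X \<times> Pow X \<times> Pow X \<times> Pow (X \<times> UNIV \<times> X))"
      by (auto intro!: image_eqI[of _ _ "(states B, initial B, final B, trans B)"])
  qed
  moreover have "finite (Pow X \<times> Pow X \<times> Pow X \<times> Pow (X \<times> (UNIV :: 'a set) \<times> X))"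
    using assms by simp
  ultimately show ?thesis
    by (rule finite_subset[OF _ finite_imageI])
qed

lemma finite_langs_size_le: "finite (lang ` {A :: 'a::finite buchi. wf_buchi A \<and> size_buchi A \<le> n})"
proof (rule finite_subset)
  show "lang ` {A. wf_buchi A \<and> size_buchi A \<le> n}
      \<subseteq> lang ` {B :: 'a buchi. wf_buchi B \<and> states B \<subseteq> {..<n}}"
  proof
    fix L assume "L \<in> lang ` {A. wf_buchi A \<and> size_buchi A \<le> n}"
    then obtain A where A: "wf_buchi A" "size_buchi A \<le> n" "L = lang A"
      by blast
    then obtain B where "wf_buchi B" "states B \<subseteq> {..<size_buchi A}" "lang B = L"
      using buchi_with_states_lessThan_size by metis
    then show "L \<in> lang ` {B. wf_buchi B \<and> states B \<subseteq> {..<n}}"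
      using A(2) by (intro image_eqI[of _ _ B]) auto
  qed
  show "finite (lang ` {B :: 'a buchi. wf_buchi B \<and> states B \<subseteq> {..<n}})"
    by (intro finite_imageI finite_wf_buchi_states_subset) simp
qed

section \<open>Transition profiles\<close>

fun reach :: "('s \<times> 'a \<times> 's) set \<Rightarrow> 's \<Rightarrow> 'a list \<Rightarrow> 's \<Rightarrow> bool" where
  "reach T p [] q \<longleftrightarrow> p = q"
| "reach T p (a # w) q \<longleftrightarrow> (\<exists>m. (p, a, m) \<in> T \<and> reach T m w q)"

fun reach_final :: "('s \<times> 'a \<times> 's) set \<Rightarrow> 's set \<Rightarrow> 's \<Rightarrow> 'a list \<Rightarrow> 's \<Rightarrow> bool" where
  "reach_final T F p [] q \<longleftrightarrow> False"
| "reach_final T F p (a # w) q \<longleftrightarrow>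
     (\<exists>m. (p, a, m) \<in> T \<and> (p \<in> F \<and> reach T m w q \<or> reach_final T F m w q))"

lemma reach_snoc: "reach T p (w @ [a]) q \<longleftrightarrow> (\<exists>m. reach T p w m \<and> (m, a, q) \<in> T)"
  by (induct w arbitrary: p) auto

lemma reach_final_snoc:
  "reach_final T F p (w @ [a]) q \<longleftrightarrow>
     (\<exists>m. (m, a, q) \<in> T \<and> (reach_final T F p w m \<or> reach T p w m \<and> m \<in> F))"
  by (induct w arbitrary: p) (auto simp: reach_snoc)

lemma reach_run_segment:
  assumes "\<And>n. (r n, \<sigma> n, r (Suc n)) \<in> T"
  shows "reach T (r i) (map \<sigma> [i..<i + k]) (r (i + k))"
  by (induct k) (use assms in \<open>auto simp: reach_snoc\<close>)

lemma reach_final_run_segment: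
  assumes "\<And>n. (r n, \<sigma> n, r (Suc n)) \<in> T" and "i \<le> j" "r j \<in> F"
  shows "j < i + k \<Longrightarrow> reach_final T F (r i) (map \<sigma> [i..<i + k]) (r (i + k))"
proof (induct k)
  case (Suc k)
  then show ?case
    using assms reach_run_segment[of r \<sigma> T i k]
    by (cases "j < i + k") (auto simp: reach_final_snoc less_Suc_eq)
qed (use assms in simp)

lemma reach_imp_path:
  "reach T p w q \<Longrightarrow>
     \<exists>\<pi>. \<pi> 0 = p \<and> \<pi> (length w) = q \<and> (\<forall>j < length w. (\<pi> j, w ! j, \<pi> (Suc j)) \<in> T)"
proof (induct w arbitrary: p)
  case Nil
  then show ?case by auto
next
  case (Cons a w)
  then obtain m \<pi> where "(p, a, m) \<in> T" "\<pi> 0 = m" "\<pi> (length w) = q"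
    "\<forall>j < length w. (\<pi> j, w ! j, \<pi> (Suc j)) \<in> T"
    by (metis reach.simps(2))
  then show ?case
    by (intro exI[of _ "\<lambda>n. if n = 0 then p else \<pi> (n - 1)"])
      (auto simp: nth_Cons' less_Suc_eq_0_disj)
qed

lemma reach_final_imp_path:
  "reach_final T F p w q \<Longrightarrow>
     \<exists>\<pi>. \<pi> 0 = p \<and> \<pi> (length w) = q \<and> (\<forall>j < length w. (\<pi> j, w ! j, \<pi> (Suc j)) \<in> T)
       \<and> (\<exists>j < length w. \<pi> j \<in> F)"
proof (induct w arbitrary: p)
  case (Cons a w)
  then obtain m \<pi> where "(p, a, m) \<in> T" "\<pi> 0 = m" "\<pi> (length w) = q"
    "\<forall>j < length w. (\<pi> j, w ! j, \<pi> (Suc j)) \<in> T" "p \<in> F \<or> (\<exists>j < length w. \<pi> j \<in> F)"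
    using reach_imp_path by fastforce
  then show ?case
    by (intro exI[of _ "\<lambda>n. if n = 0 then p else \<pi> (n - 1)"])
      (auto simp: nth_Cons' less_Suc_eq_0_disj)
qed simp

text \<open>
  The profile of a finite word records the pairs of states it connects and those it connects
  through a final state; a run stays a run, and keeps visiting final states, when a block of
  the input is replaced by a block with a larger profile.
\<close>

type_synonym 's trans_profile = "('s \<times> 's) set \<times> ('s \<times> 's) set"

abbreviation profiles_on :: "'s set \<Rightarrow> 's trans_profile set" where
  "profiles_on S \<equiv> Pow (S \<times> S) \<times> Pow (S \<times> S)"

definition profile_step ::
    "('s \<times> 'a \<times> 's) set \<Rightarrow> 's set \<Rightarrow> 's trans_profile \<Rightarrow> 'a \<Rightarrow> 's trans_profile" where
  "profile_step T F P a =
     ({(p, q). \<exists>m. (p, m) \<in> fst P \<and> (m, a, q) \<in> T},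
      {(p, q). \<exists>m. (m, a, q) \<in> T \<and> ((p, m) \<in> snd P \<or> (p, m) \<in> fst P \<and> m \<in> F)})"

definition profile :: "('s \<times> 'a \<times> 's) set \<Rightarrow> 's set \<Rightarrow> 's set \<Rightarrow> 'a list \<Rightarrow> 's trans_profile" where
  "profile T F S w = foldl (profile_step T F) (Id_on S, {}) w"

lemma profile_Nil [simp]: "profile T F S [] = (Id_on S, {})"
  by (simp add: profile_def)

lemma profile_snoc: "profile T F S (w @ [a]) = profile_step T F (profile T F S w) a"
  by (simp add: profile_def)

lemma profile_eq_reach:
  "profile T F S w =
     ({(p, q). p \<in> S \<and> reach T p w q}, {(p, q). p \<in> S \<and> reach_final T F p w q})"
  by (induct w rule: rev_induct)
    (auto simp: profile_snoc profile_step_def reach_snoc reach_final_snoc Id_on_def)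

lemma profile_step_in_profiles_on:
  "T \<subseteq> S \<times> UNIV \<times> S \<Longrightarrow> P \<in> profiles_on S \<Longrightarrow>
     profile_step T F P a \<in> profiles_on S"
  unfolding profile_step_def by auto

lemma profile_in_profiles_on: "T \<subseteq> S \<times> UNIV \<times> S \<Longrightarrow> profile T F S w \<in> profiles_on S"
  by (induct w rule: rev_induct) (auto simp: profile_snoc profile_step_in_profiles_on)

section \<open>Block factorisations of infinite words\<close>

definition block_index :: "(nat \<Rightarrow> nat) \<Rightarrow> nat \<Rightarrow> nat" where
  "block_index b n = (LEAST i. n < b (Suc i))"

definition block :: "(nat \<Rightarrow> nat) \<Rightarrow> (nat \<Rightarrow> 'a) \<Rightarrow> nat \<Rightarrow> 'a list" where
  "block b \<sigma> i = map \<sigma> [b i..<b (Suc i)]"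

lemma block_index_bounds:
  assumes "strict_mono b" "b 0 = 0"
  shows "b (block_index b n) \<le> n" "n < b (Suc (block_index b n))"
proof -
  have "n < b (Suc n)"
    using strict_mono_imp_increasing[OF assms(1), of "Suc n"] by simp
  then show "n < b (Suc (block_index b n))"
    unfolding block_index_def by (rule LeastI)
  show "b (block_index b n) \<le> n"
  proof (cases "block_index b n")
    case (Suc i)
    then have "\<not> n < b (Suc i)"
      using not_less_Least[of i "\<lambda>i. n < b (Suc i)"] by (simp add: block_index_def)
    then show ?thesis
      using Suc by simp
  qed (use assms(2) in simp)
qed

lemma block_index_eqI:
  assumes "strict_mono b" "b i \<le> n" "n < b (Suc i)"
  shows "block_index b n = i"
  unfolding block_index_def
proof (rule Least_equality)
  fix j assume "n < b (Suc j)"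
  then have "b i < b (Suc j)"
    using assms(2) by simp
  then show "i \<le> j"
    using assms(1) strict_mono_less by fastforce
qed fact

lemma block_index_self: "strict_mono b \<Longrightarrow> block_index b (b i) = i"
  using block_index_eqI strict_monoD by blast

lemma block_index_add:
  "strict_mono b \<Longrightarrow> j < b (Suc i) - b i \<Longrightarrow> block_index b (b i + j) = i"
  by (rule block_index_eqI) auto

lemma length_block [simp]: "length (block b \<sigma> i) = b (Suc i) - b i"
  by (simp add: block_def)

lemma nth_block [simp]: "j < b (Suc i) - b i \<Longrightarrow> block b \<sigma> i ! j = \<sigma> (b i + j)"
  by (simp add: block_def)

lemma run_from_block_paths:
  assumes b: "strict_mono b" "b 0 = 0"
    and P: "\<And>i. P i 0 = s i \<and> P i (b (Suc i) - b i) = s (Suc i)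
              \<and> (\<forall>j < b (Suc i) - b i. (P i j, \<sigma> (b i + j), P i (Suc j)) \<in> T)"
  obtains r where "r 0 = s 0" "\<And>n. (r n, \<sigma> n, r (Suc n)) \<in> T"
    "\<And>i j. j < b (Suc i) - b i \<Longrightarrow> r (b i + j) = P i j"
proof
  define r where "r n = P (block_index b n) (n - b (block_index b n))" for n
  show r_block: "r (b i + j) = P i j" if "j < b (Suc i) - b i" for i j
    using block_index_add[OF b(1) that] by (simp add: r_def)
  have "0 < b 1 - b 0"
    using strict_monoD[OF b(1), of 0 1] by simp
  then show "r 0 = s 0"
    using r_block[of 0 0] P[of 0] b(2) by simp
  show "(r n, \<sigma> n, r (Suc n)) \<in> T" for n
  proof -
    define i where "i = block_index b n"
    have i: "b i \<le> n" "n < b (Suc i)"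
      using block_index_bounds[OF b] by (auto simp: i_def)
    have "r n = P i (n - b i)"
      by (simp add: r_def i_def)
    moreover have "r (Suc n) = P i (Suc (n - b i))"
    proof (cases "Suc n < b (Suc i)")
      case True
      then show ?thesis
        using block_index_eqI[OF b(1), of i "Suc n"] i by (simp add: r_def Suc_diff_le)
    next
      case False
      then have "Suc n = b (Suc i)"
        using i by simp
      moreover have "block_index b (b (Suc i)) = Suc i"
        using block_index_self[OF b(1)] .
      moreover have "Suc (n - b i) = b (Suc i) - b i"
        using \<open>Suc n = b (Suc i)\<close> i(1) by linarith
      ultimately show ?thesis
        using P[of i] P[of "Suc i"] by (simp add: r_def)
    qed
    moreover have "n - b i < b (Suc i) - b i" "b i + (n - b i) = n"
      using i by auto
    ultimately show ?thesis
      using P[of i] by metis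
  qed
qed

lemma infinite_visits_transfer:
  fixes b b' :: "nat \<Rightarrow> nat"
  assumes b: "strict_mono b" "b 0 = 0" and b': "strict_mono b'"
    and \<rho>F: "infinite {n. \<rho> n \<in> F}"
    and visit: "\<And>i j. b i \<le> j \<Longrightarrow> j < b (Suc i) \<Longrightarrow> \<rho> j \<in> F \<Longrightarrow> \<exists>k \<ge> b' i. r k \<in> F"
  shows "infinite {n. r n \<in> F}"
  unfolding infinite_nat_iff_unbounded_le
proof
  fix m
  obtain j where j: "b m \<le> j" "\<rho> j \<in> F"
    using \<rho>F unfolding infinite_nat_iff_unbounded_le by blast
  define i where "i = block_index b j"
  have i: "b i \<le> j" "j < b (Suc i)"
    using block_index_bounds[OF b] by (auto simp: i_def)
  have "m \<le> i"
  proof (rule ccontr)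
    assume "\<not> m \<le> i"
    then have "b (Suc i) \<le> b m"
      using strict_mono_less_eq[OF b(1)] by simp
    then show False
      using i j(1) by simp
  qed
  then have "m \<le> b' i"
    using strict_mono_imp_increasing[OF b', of i] by simp
  moreover obtain k where "b' i \<le> k" "r k \<in> F"
    using visit[OF i j(2)] by blast
  ultimately show "\<exists>n\<ge>m. n \<in> {n. r n \<in> F}"
    by (intro exI[of _ k]) auto
qed

lemma path_if_profile_le:
  assumes le: "profile T F S u \<le> profile T F S v" and "p \<in> S" "reach T p u q"
  obtains \<pi> where "\<pi> 0 = p" "\<pi> (length v) = q" "\<forall>j < length v. (\<pi> j, v ! j, \<pi> (Suc j)) \<in> T"
    "reach_final T F p u q \<Longrightarrow> \<exists>j < length v. \<pi> j \<in> F"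
proof (cases "reach_final T F p u q")
  case True
  then have "(p, q) \<in> snd (profile T F S u)"
    using assms(2) by (simp add: profile_eq_reach)
  then have "(p, q) \<in> snd (profile T F S v)"
    using snd_mono[OF le] by blast
  then have "reach_final T F p v q"
    by (simp add: profile_eq_reach)
  then obtain \<pi> where \<pi>: "\<pi> 0 = p \<and> \<pi> (length v) = q
      \<and> (\<forall>j < length v. (\<pi> j, v ! j, \<pi> (Suc j)) \<in> T) \<and> (\<exists>j < length v. \<pi> j \<in> F)"
    by (rule exE[OF reach_final_imp_path])
  show ?thesis
    by (rule that[of \<pi>]) (use \<pi> in auto)
next
  case False
  have "(p, q) \<in> fst (profile T F S u)"
    using assms(2,3) by (simp add: profile_eq_reach)
  then have "(p, q) \<in> fst (profile T F S v)"
    using fst_mono[OF le] by blast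
  then have "reach T p v q"
    by (simp add: profile_eq_reach)
  then obtain \<pi> where \<pi>: "\<pi> 0 = p \<and> \<pi> (length v) = q
      \<and> (\<forall>j < length v. (\<pi> j, v ! j, \<pi> (Suc j)) \<in> T)"
    by (rule exE[OF reach_imp_path])
  show ?thesis
    by (rule that[of \<pi>]) (use \<pi> False in auto)
qed

lemma block_path_if_profile_le:
  assumes \<rho>: "\<And>n. (\<rho> n, z n, \<rho> (Suc n)) \<in> T" "\<And>n. \<rho> n \<in> S" and b: "strict_mono b"
    and le: "profile T F S (block b z i) \<le> profile T F S (block b' y i)"
  shows "\<exists>\<pi>. \<pi> 0 = \<rho> (b i) \<and> \<pi> (b' (Suc i) - b' i) = \<rho> (b (Suc i))
    \<and> (\<forall>j < b' (Suc i) - b' i. (\<pi> j, y (b' i + j), \<pi> (Suc j)) \<in> T)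
    \<and> ((\<exists>j. b i \<le> j \<and> j < b (Suc i) \<and> \<rho> j \<in> F) \<longrightarrow> (\<exists>k < b' (Suc i) - b' i. \<pi> k \<in> F))"
proof -
  define k where "k = b (Suc i) - b i"
  have k: "b i + k = b (Suc i)" "block b z i = map z [b i..<b i + k]"
    using strict_monoD[OF b, of i "Suc i"] by (auto simp: k_def block_def)
  have reach: "reach T (\<rho> (b i)) (block b z i) (\<rho> (b (Suc i)))"
    using reach_run_segment[of \<rho> z T "b i" k, OF \<rho>(1)] k by simp
  have final: "reach_final T F (\<rho> (b i)) (block b z i) (\<rho> (b (Suc i)))"
    if "\<exists>j. b i \<le> j \<and> j < b (Suc i) \<and> \<rho> j \<in> F"
    using that reach_final_run_segment[of \<rho> z T "b i" _ F k, OF \<rho>(1)] k by auto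
  obtain \<pi> where "\<pi> 0 = \<rho> (b i)" "\<pi> (length (block b' y i)) = \<rho> (b (Suc i))"
    "\<forall>j < length (block b' y i). (\<pi> j, block b' y i ! j, \<pi> (Suc j)) \<in> T"
    "reach_final T F (\<rho> (b i)) (block b z i) (\<rho> (b (Suc i))) \<Longrightarrow> \<exists>j < length (block b' y i). \<pi> j \<in> F"
    by (rule path_if_profile_le[OF le \<rho>(2) reach]) blast
  then show ?thesis
    using final by (intro exI[of _ \<pi>]) auto
qed

lemma gen_lang_if_block_profiles_le:
  assumes T: "T \<subseteq> S \<times> UNIV \<times> S" and I: "I \<subseteq> S" and z: "z \<in> gen_lang I F T"
    and b: "strict_mono b" "b 0 = 0" and b': "strict_mono b'" "b' 0 = 0"
    and le: "\<And>i. profile T F S (block b z i) \<le> profile T F S (block b' y i)"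
  shows "y \<in> gen_lang I F T"
proof -
  obtain \<rho> where \<rho>0: "\<rho> 0 \<in> I" and \<rho>: "\<And>n. (\<rho> n, z n, \<rho> (Suc n)) \<in> T"
    and \<rho>F: "infinite {n. \<rho> n \<in> F}"
    using z by (auto simp: gen_lang_def)
  have \<rho>S: "\<rho> n \<in> S" for n
    using \<rho>0 \<rho>[of "n - 1"] I T by (cases n) auto
  define visits where "visits i \<longleftrightarrow> (\<exists>j. b i \<le> j \<and> j < b (Suc i) \<and> \<rho> j \<in> F)" for i
  have "\<forall>i. \<exists>\<pi>. \<pi> 0 = \<rho> (b i) \<and> \<pi> (b' (Suc i) - b' i) = \<rho> (b (Suc i))
      \<and> (\<forall>j < b' (Suc i) - b' i. (\<pi> j, y (b' i + j), \<pi> (Suc j)) \<in> T)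
      \<and> (visits i \<longrightarrow> (\<exists>k < b' (Suc i) - b' i. \<pi> k \<in> F))"
    unfolding visits_def using block_path_if_profile_le[OF \<rho> \<rho>S b(1) le] by blast
  then obtain P where P: "\<forall>i. P i 0 = \<rho> (b i) \<and> P i (b' (Suc i) - b' i) = \<rho> (b (Suc i))
      \<and> (\<forall>j < b' (Suc i) - b' i. (P i j, y (b' i + j), P i (Suc j)) \<in> T)
      \<and> (visits i \<longrightarrow> (\<exists>k < b' (Suc i) - b' i. P i k \<in> F))"
    by (metis choice)
  obtain r where r0: "r 0 = \<rho> (b 0)" and r: "\<And>n. (r n, y n, r (Suc n)) \<in> T"
    and rP: "\<And>i j. j < b' (Suc i) - b' i \<Longrightarrow> r (b' i + j) = P i j"
    by (rule run_from_block_paths[OF b', of P "\<lambda>i. \<rho> (b i)" y T]) (use P in blast)+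
  have "infinite {n. r n \<in> F}"
  proof (rule infinite_visits_transfer[OF b b'(1) \<rho>F])
    fix i j assume "b i \<le> j" "j < b (Suc i)" "\<rho> j \<in> F"
    then obtain k where "k < b' (Suc i) - b' i" "P i k \<in> F"
      using P by (auto simp: visits_def)
    then show "\<exists>k \<ge> b' i. r k \<in> F"
      using rP by (intro exI[of _ "b' i + k"]) auto
  qed
  then show ?thesis
    using r0 r \<rho>0 b(2) unfolding gen_lang_def by (intro CollectI exI[of _ r]) auto
qed

section \<open>Complements of \<omega>-regular languages are Buchi-open\<close>

text \<open>
  An automaton reading blocks and tracking the profile of the current block: phase \<open>0\<close> is
  inside the first block, phase \<open>1\<close> inside a later one, and phase \<open>2\<close> marks a block
  boundary, which may only be crossed when the block read has a profile below \<open>U\<close> (first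
  block) or \<open>V\<close> (later blocks).
\<close>

definition block_trans ::
    "('s \<times> 'a \<times> 's) set \<Rightarrow> 's set \<Rightarrow> 's set \<Rightarrow> 's trans_profile \<Rightarrow> 's trans_profile
       \<Rightarrow> ((nat \<times> 's trans_profile) \<times> 'a \<times> (nat \<times> 's trans_profile)) set" where
  "block_trans T F S U V = {((k, P), a, (k', P')).
     k \<in> {0, 1, 2} \<and> k' \<in> {0, 1, 2} \<and> P \<in> profiles_on S \<and> P' \<in> profiles_on S \<and>
     (if k' = 2 then P' = (Id_on S, {}) \<and> profile_step T F P a \<le> (if k = 0 then U else V)
      else P' = profile_step T F P a \<and> k' = (if k = 0 then 0 else 1))}"

definition block_lang ::
    "('s \<times> 'a \<times> 's) set \<Rightarrow> 's set \<Rightarrow> 's set \<Rightarrow> 's trans_profile \<Rightarrow> 's trans_profile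
       \<Rightarrow> (nat \<Rightarrow> 'a) set" where
  "block_lang T F S U V = gen_lang {(0, Id_on S, {})} {(2, Id_on S, {})} (block_trans T F S U V)"

lemma omega_regular_block_lang: "finite S \<Longrightarrow> omega_regular (block_lang T F S U V)"
  unfolding block_lang_def
  by (rule omega_regular_gen_lang[where Q = "{0, 1, 2} \<times> profiles_on S"])
    (auto simp: block_trans_def Id_on_def)

lemma block_lang_if_block_profiles:
  assumes T: "T \<subseteq> S \<times> UNIV \<times> S" and b: "strict_mono b" "b 0 = 0"
    and U: "profile T F S (block b y 0) = U"
    and V: "\<And>i. 0 < i \<Longrightarrow> profile T F S (block b y i) = V"
  shows "y \<in> block_lang T F S U V"
proof -
  define phase where
    "phase n = (if block_index b n = 0 then 0 else if n = b (block_index b n) then 2 else 1 :: nat)"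
    for n
  define r where "r n = (phase n, profile T F S (map y [b (block_index b n)..<n]))" for n
  have boundary: "r (b i) = (if i = 0 then (0, Id_on S, {}) else (2, Id_on S, {}))" for i
    using block_index_self[OF b(1)] by (simp add: r_def phase_def)
  have r: "(r n, y n, r (Suc n)) \<in> block_trans T F S U V" for n
  proof -
    define i where "i = block_index b n"
    have i: "b i \<le> n" "n < b (Suc i)"
      using block_index_bounds[OF b] by (auto simp: i_def)
    note in_profiles =
      profile_in_profiles_on[OF T] profile_step_in_profiles_on[OF T profile_in_profiles_on[OF T]]
    have step: "profile T F S (map y [b i..<Suc n]) = profile_step T F (snd (r n)) (y n)"
      using i by (simp add: r_def i_def profile_snoc)
    show ?thesis
    proof (cases "Suc n < b (Suc i)")
      case True
      then have "block_index b (Suc n) = i"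
        using block_index_eqI[OF b(1)] i by simp
      then show ?thesis
        using i True step
        by (auto simp: block_trans_def r_def phase_def i_def[symmetric] in_profiles)
    next
      case False
      then have "Suc n = b (Suc i)"
        using i by simp
      moreover have "profile T F S (map y [b i..<b (Suc i)]) = (if fst (r n) = 0 then U else V)"
        using U V[of i] by (auto simp: block_def r_def phase_def i_def[symmetric])
      ultimately show ?thesis
        using boundary[of "Suc i"] step
        by (auto simp: block_trans_def r_def phase_def i_def[symmetric] in_profiles)
    qed
  qed
  have "range (\<lambda>i. b (Suc i)) \<subseteq> {n. r n \<in> {(2, Id_on S, {})}}"
    using boundary by auto
  moreover have "infinite (range (\<lambda>i. b (Suc i)))"
    using b(1) by (intro range_inj_infinite) (auto simp: inj_def strict_mono_eq)
  ultimately have "infinite {n. r n \<in> {(2, Id_on S, {})}}"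
    using infinite_super by blast
  then show ?thesis
    using boundary[of 0] b(2) r unfolding block_lang_def gen_lang_def
    by (intro CollectI exI[of _ r]) auto
qed

definition enum_blocks :: "nat set \<Rightarrow> nat \<Rightarrow> nat" where
  "enum_blocks M i = (case i of 0 \<Rightarrow> 0 | Suc j \<Rightarrow> enumerate M j)"

lemma enum_blocks:
  assumes M: "infinite M" "0 \<notin> M"
  shows "strict_mono (enum_blocks M)" "enum_blocks M 0 = 0" "enum_blocks M (Suc i) \<in> M"
    and "enum_blocks M i < t \<Longrightarrow> t < enum_blocks M (Suc i) \<Longrightarrow> t \<notin> M"
proof -
  show "enum_blocks M 0 = 0" "enum_blocks M (Suc i) \<in> M"
    using enumerate_in_set[OF M(1)] by (simp_all add: enum_blocks_def)
  have "0 < enumerate M 0"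
    using enumerate_in_set[OF M(1), of 0] M(2) by (metis gr0I)
  then have "enum_blocks M i < enum_blocks M (Suc i)" for i
    by (cases i) (auto simp: enum_blocks_def enumerate_step[OF M(1)])
  then show "strict_mono (enum_blocks M)"
    by (simp add: strict_mono_Suc_iff)
  show "t \<notin> M" if "enum_blocks M i < t" "t < enum_blocks M (Suc i)"
  proof
    assume "t \<in> M"
    then obtain k where "enumerate M k = t"
      using enumerate_Ex[OF M(1)] by blast
    then show False
      using that enumerate_mono_iff[OF M(1)] by (cases i) (auto simp: enum_blocks_def)
  qed
qed

lemma profile_le_if_block_trans_segment:
  assumes r: "\<And>n. (r n, z n, r (Suc n)) \<in> block_trans T F S U V"
    and m: "m < m'" "snd (r m) = (Id_on S, {})" "fst (r m') = 2"
    and between: "\<And>t. m < t \<Longrightarrow> t < m' \<Longrightarrow> fst (r t) \<noteq> 2"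
  shows "profile T F S (map z [m..<m']) \<le> (if fst (r m) = 0 then U else V)"
proof -
  have inv: "snd (r (m + j)) = profile T F S (map z [m..<m + j])
      \<and> (fst (r (m + j)) = 0 \<longleftrightarrow> fst (r m) = 0)" if "m + j < m'" for j
    using that
  proof (induct j)
    case (Suc j)
    then have "fst (r (Suc (m + j))) \<noteq> 2"
      using between by simp
    then have "snd (r (Suc (m + j))) = profile_step T F (snd (r (m + j))) (z (m + j))
        \<and> (fst (r (Suc (m + j))) = 0 \<longleftrightarrow> fst (r (m + j)) = 0)"
      using r[of "m + j"] unfolding block_trans_def
      by (cases "r (m + j)", cases "r (Suc (m + j))") auto
    then show ?case
      using Suc by (simp add: profile_snoc)
  qed (use m(2) in simp)
  define j where "j = m' - Suc m"
  have j: "m + j < m'" "Suc (m + j) = m'"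
    using m(1) by (auto simp: j_def)
  then have "profile_step T F (snd (r (m + j))) (z (m + j))
      \<le> (if fst (r (m + j)) = 0 then U else V)"
    using r[of "m + j"] m(3) unfolding block_trans_def by (cases "r (m + j)", cases "r m'") auto
  moreover have "map z [m..<m'] = map z [m..<m + j] @ [z (m + j)]"
    using j(2)[symmetric] by simp
  ultimately show ?thesis
    using inv[OF j(1)] by (simp add: profile_snoc)
qed

lemma block_lang_imp_block_profiles_le:
  assumes "z \<in> block_lang T F S U V"
  obtains b where "strict_mono b" "b 0 = 0"
    "\<And>i. profile T F S (block b z i) \<le> (if i = 0 then U else V)"
proof -
  obtain r where r0: "r 0 = (0, Id_on S, {})"
    and r: "\<And>n. (r n, z n, r (Suc n)) \<in> block_trans T F S U V"
    and rF: "infinite {n. r n \<in> {(2, Id_on S, {})}}"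
    using assms by (auto simp: block_lang_def gen_lang_def)
  define M where "M = {n. fst (r n) = 2}"
  have M: "infinite M" "0 \<notin> M"
    using rF r0 by (auto simp: M_def elim!: infinite_super[rotated])
  note b = enum_blocks[OF M]
  have boundary_Id: "snd (r n) = (Id_on S, {})" if n: "n \<in> M" for n
  proof -
    obtain k where "n = Suc k"
      using M(2) n by (cases n) auto
    then show ?thesis
      using r[of k] n unfolding block_trans_def M_def by (cases "r k", cases "r n") auto
  qed
  have start: "snd (r (enum_blocks M i)) = (Id_on S, {})
      \<and> (fst (r (enum_blocks M i)) = 0 \<longleftrightarrow> i = 0)" for i
    using r0 b(2,3) boundary_Id by (cases i) (auto simp: M_def)
  show ?thesis
  proof (rule that[OF b(1,2)])
    fix i
    let ?m = "enum_blocks M i" and ?m' = "enum_blocks M (Suc i)"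
    have "profile T F S (map z [?m..<?m']) \<le> (if fst (r ?m) = 0 then U else V)"
      by (rule profile_le_if_block_trans_segment[of r z T F S U V])
        (use r start[of i] b(3,4) strict_monoD[OF b(1)] in \<open>auto simp: M_def\<close>)
    then show "profile T F S (block (enum_blocks M) z i) \<le> (if i = 0 then U else V)"
      using start[of i] by (simp add: block_def)
  qed
qed

lemma ramsey_blocks:
  fixes c :: "nat \<Rightarrow> nat \<Rightarrow> 'c"
  assumes "finite C" "\<And>i j. c i j \<in> C"
  obtains b where "strict_mono b" "b 0 = 0" "\<And>i. 0 < i \<Longrightarrow> c (b i) (b (Suc i)) = c (b 1) (b 2)"
proof -
  obtain h where h: "bij_betw h C {0..<card C}"
    using ex_bij_betw_finite_nat[OF assms(1)] by blast
  then have h_less: "h x < card C" if "x \<in> C" for x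
    using that by (auto simp: bij_betw_def)
  define f where "f X = h (c (Min X) (Max X))" for X
  have "f X < card C" for X
    unfolding f_def by (rule h_less[OF assms(2)])
  then have part: "\<forall>x \<in> {0<..}. \<forall>y \<in> {0<..}. x \<noteq> y \<longrightarrow> f {x, y} < card C"
    by blast
  obtain Y t where Y: "Y \<subseteq> {0<..}" "infinite Y"
    and hom: "\<forall>x \<in> Y. \<forall>y \<in> Y. x \<noteq> y \<longrightarrow> f {x, y} = t"
    using Ramsey2[OF infinite_Ioi part] by blast
  then have "0 \<notin> Y"
    by auto
  note b = enum_blocks[OF \<open>infinite Y\<close> this]
  let ?b = "enum_blocks Y"
  have f_block: "f {?b i, ?b (Suc i)} = h (c (?b i) (?b (Suc i)))" for i
    using strict_monoD[OF b(1), of i "Suc i"] by (simp add: f_def)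
  have hom_block: "f {?b i, ?b (Suc i)} = t" if "0 < i" for i
  proof -
    have "?b i \<in> Y" "?b (Suc i) \<in> Y"
      using b(3)[of "i - 1"] b(3)[of i] that by simp_all
    moreover have "?b i \<noteq> ?b (Suc i)"
      using strict_monoD[OF b(1), of i "Suc i"] by simp
    ultimately show ?thesis
      using hom by blast
  qed
  have "c (?b i) (?b (Suc i)) = c (?b 1) (?b 2)" if "0 < i" for i
  proof -
    have "h (c (?b i) (?b (Suc i))) = h (c (?b 1) (?b (Suc 1)))"
      using hom_block[OF that] hom_block[of 1] f_block[of i] f_block[of 1] by simp
    then show ?thesis
      using h assms(2) inj_onD by (metis bij_betw_def Suc_1)
  qed
  then show ?thesis
    using that b(1,2) by blast
qed

lemma omega_regular_nbhd_disjoint_lang: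
  assumes A: "wf_buchi A" and y: "y \<notin> lang A"
  obtains L where "omega_regular L" "y \<in> L" "L \<inter> lang A = {}"
proof -
  let ?S = "states A" and ?T = "trans A" and ?F = "final A" and ?I = "initial A"
  have T: "?T \<subseteq> ?S \<times> UNIV \<times> ?S" and I: "?I \<subseteq> ?S" and S: "finite ?S"
    using A by (auto simp: wf_buchi_def)
  obtain b where b: "strict_mono b" "b 0 = 0" and
    same: "\<And>i. 0 < i \<Longrightarrow>
      profile ?T ?F ?S (map y [b i..<b (Suc i)]) = profile ?T ?F ?S (map y [b 1..<b 2])"
    using ramsey_blocks[of "profiles_on ?S" "\<lambda>i j. profile ?T ?F ?S (map y [i..<j])",
        OF _ profile_in_profiles_on[OF T]] S by blast
  define U where "U = profile ?T ?F ?S (block b y 0)"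
  define V where "V = profile ?T ?F ?S (block b y 1)"
  have V: "profile ?T ?F ?S (block b y i) = V" if "0 < i" for i
    using same[OF that] by (simp add: V_def block_def numeral_2_eq_2)
  have "y \<in> block_lang ?T ?F ?S U V"
    using block_lang_if_block_profiles[OF T b] V by (simp add: U_def)
  moreover have "block_lang ?T ?F ?S U V \<inter> lang A = {}"
  proof (rule ccontr)
    assume "block_lang ?T ?F ?S U V \<inter> lang A \<noteq> {}"
    then obtain z where z: "z \<in> block_lang ?T ?F ?S U V" "z \<in> gen_lang ?I ?F ?T"
      by (auto simp: lang_eq_gen_lang)
    obtain b' where b': "strict_mono b'" "b' 0 = 0"
      and le: "\<And>i. profile ?T ?F ?S (block b' z i) \<le> (if i = 0 then U else V)"
      by (rule block_lang_imp_block_profiles_le[OF z(1)]) blast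
    have "profile ?T ?F ?S (block b' z i) \<le> profile ?T ?F ?S (block b y i)" for i
      using le[of i] V[of i] by (cases "i = 0") (auto simp: U_def)
    then have "y \<in> gen_lang ?I ?F ?T"
      by (rule gen_lang_if_block_profiles_le[OF T I z(2) b' b])
    then show False
      using y by (simp add: lang_eq_gen_lang)
  qed
  ultimately show ?thesis
    using that omega_regular_block_lang[OF S] by blast
qed

section \<open>The separation distance\<close>

definition letter_buchi :: "nat \<Rightarrow> 'a \<Rightarrow> 'a buchi" where
  "letter_buchi k c = \<lparr>states = {..Suc k}, initial = {0}, final = {Suc k},
     trans = {(i, a, Suc i) | i a. i < k} \<union> {(k, c, Suc k)} \<union> {(Suc k, a, Suc k) | a. True}\<rparr>"

lemma wf_letter_buchi: "wf_buchi (letter_buchi k c)"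
  by (auto simp: letter_buchi_def wf_buchi_def)

lemma lang_letter_buchi: "lang (letter_buchi k c) = {z. z k = c}"
proof (intro set_eqI iffI)
  fix z assume "z \<in> lang (letter_buchi k c)"
  then obtain r where r0: "r 0 = 0" and r: "\<And>n. (r n, z n, r (Suc n)) \<in> trans (letter_buchi k c)"
    by (auto simp: lang_def run_def letter_buchi_def)
  have "i \<le> k \<longrightarrow> r i = i" for i
  proof (induct i)
    case (Suc i)
    then show ?case
      using r[of i] by (auto simp: letter_buchi_def)
  qed (simp add: r0)
  then show "z \<in> {z. z k = c}"
    using r[of k] by (auto simp: letter_buchi_def)
next
  fix z assume z: "z \<in> {z. z k = c}"
  define r where "r n = min n (Suc k)" for n
  have "(r n, z n, r (Suc n)) \<in> trans (letter_buchi k c)" for n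
    using z by (cases n k rule: linorder_cases) (auto simp: r_def letter_buchi_def)
  moreover have "{n. r n \<in> final (letter_buchi k c)} = {Suc k..}"
    by (auto simp: r_def letter_buchi_def)
  ultimately show "z \<in> lang (letter_buchi k c)"
    unfolding lang_def run_def accepting_def
    by (intro CollectI exI[of _ r]) (auto simp: r_def letter_buchi_def infinite_Ici)
qed

definition min_separator_size :: "(nat \<Rightarrow> 'a) \<Rightarrow> (nat \<Rightarrow> 'a) \<Rightarrow> nat" where
  "min_separator_size x y = (LEAST n. \<exists>A. wf_buchi A \<and> separates A x y \<and> size_buchi A = n)"

lemma buchi_dist_eq: "x \<noteq> y \<Longrightarrow> buchi_dist x y = 2 powr - real (min_separator_size x y)"
  by (simp add: buchi_dist_def min_separator_size_def)

lemma min_separator_size_attained: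
  assumes "x \<noteq> y"
  obtains A where "wf_buchi A" "separates A x y" "size_buchi A = min_separator_size x y"
proof -
  obtain k where "x k \<noteq> y k"
    using assms by (auto simp: fun_eq_iff)
  then have "separates (letter_buchi k (x k)) x y"
    by (simp add: separates_def lang_letter_buchi)
  then have "\<exists>n A. wf_buchi A \<and> separates A x y \<and> size_buchi A = n"
    using wf_letter_buchi by (intro exI conjI) auto
  then have "\<exists>A. wf_buchi A \<and> separates A x y \<and> size_buchi A = min_separator_size x y"
    unfolding min_separator_size_def by (rule LeastI_ex)
  then show ?thesis
    using that by blast
qed

lemma min_separator_size_le:
  assumes "wf_buchi A" "separates A x y"
  shows "min_separator_size x y \<le> size_buchi A"
  unfolding min_separator_size_def by (rule Least_le) (use assms in blast)

lemma buchi_dist_ge_if_separates: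
  assumes "wf_buchi A" "separates A x y"
  shows "2 powr - real (size_buchi A) \<le> buchi_dist x y"
proof -
  have "x \<noteq> y"
    using assms(2) by (auto simp: separates_def)
  then show ?thesis
    using min_separator_size_le[OF assms] by (simp add: buchi_dist_eq)
qed

lemma buchi_dist_le_if_no_separator:
  assumes "\<And>A. wf_buchi A \<Longrightarrow> size_buchi A \<le> n \<Longrightarrow> \<not> separates A x y"
  shows "buchi_dist x y \<le> 2 powr - real (Suc n)"
proof (cases "x = y")
  case False
  then obtain A where A: "wf_buchi A" "separates A x y" "size_buchi A = min_separator_size x y"
    by (rule min_separator_size_attained)
  then have "\<not> size_buchi A \<le> n"
    using assms by blast
  then have "Suc n \<le> min_separator_size x y"
    using A(3) by linarith
  then show ?thesis
    using False by (simp add: buchi_dist_eq)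
qed (simp add: buchi_dist_def)

lemma buchi_dist_commute: "buchi_dist x y = buchi_dist y x"
proof -
  have "separates A x y = separates A y x" for A
    by (auto simp: separates_def)
  then show ?thesis
    by (simp add: buchi_dist_def eq_commute[of x y])
qed

lemma buchi_dist_ultrametric: "buchi_dist x z \<le> max (buchi_dist x y) (buchi_dist y z)"
proof (cases "x = z")
  case False
  then obtain A where A: "wf_buchi A" "separates A x z" "size_buchi A = min_separator_size x z"
    by (rule min_separator_size_attained)
  then have dist: "buchi_dist x z = 2 powr - real (size_buchi A)"
    using False by (simp add: buchi_dist_eq)
  have "separates A x y \<or> separates A y z"
    using A(2) by (auto simp: separates_def)
  then have "buchi_dist x z \<le> buchi_dist x y \<or> buchi_dist x z \<le> buchi_dist y z"
    unfolding dist using buchi_dist_ge_if_separates[OF A(1)] by blast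
  then show ?thesis
    by (auto simp: le_max_iff_disj)
qed (simp add: buchi_dist_def le_max_iff_disj)

lemma Metric_space_buchi_dist: "Metric_space UNIV buchi_dist"
proof
  fix x y z :: "nat \<Rightarrow> 'a"
  show nonneg: "0 \<le> buchi_dist x y" and "buchi_dist x y = 0 \<longleftrightarrow> x = y"
    by (simp_all add: buchi_dist_def)
  show "buchi_dist x y = buchi_dist y x"
    by (rule buchi_dist_commute)
  have "0 \<le> buchi_dist y z"
    by (simp add: buchi_dist_def)
  then show "buchi_dist x z \<le> buchi_dist x y + buchi_dist y z"
    using buchi_dist_ultrametric[of x z y] nonneg by linarith
qed

section \<open>The metric topology is the Buchi topology\<close>

lemma two_powr_neg_less:
  assumes "0 < r"
  obtains n where "(2::real) powr - real n < r"
proof -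
  obtain n where "(1 / 2 :: real) ^ n < r"
    using real_arch_pow_inv[OF assms, of "1 / 2"] by auto
  then show ?thesis
    by (intro that[of n]) (simp add: powr_minus_divide powr_realpow power_one_over)
qed

lemma openin_mtopology_omega_regular:
  assumes "omega_regular L"
  shows "openin (Metric_space.mtopology UNIV buchi_dist) L"
proof -
  interpret M: Metric_space UNIV buchi_dist
    by (rule Metric_space_buchi_dist)
  obtain A where A: "wf_buchi A" "lang A = L"
    using assms by (auto simp: omega_regular_def)
  have "M.mball x (2 powr - real (size_buchi A)) \<subseteq> L" if "x \<in> L" for x
  proof
    fix y assume y: "y \<in> M.mball x (2 powr - real (size_buchi A))"
    show "y \<in> L"
    proof (rule ccontr)
      assume "y \<notin> L"
      then have "separates A x y"
        using that A(2) by (simp add: separates_def)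
      moreover have "buchi_dist x y < 2 powr - real (size_buchi A)"
        using y by (simp add: M.mball_def)
      ultimately show False
        using buchi_dist_ge_if_separates[OF A(1)] by fastforce
    qed
  qed
  then show ?thesis
    unfolding M.openin_mtopology by (auto intro!: exI[of _ "2 powr - real (size_buchi A)"])
qed

lemma openin_buchi_topology_omega_regular: "omega_regular L \<Longrightarrow> openin buchi_topology L"
  unfolding buchi_topology_def openin_topology_generated_by_iff
  by (rule generate_topology_on.Basis) simp

lemma openin_buchi_topology_Compl_lang:
  assumes "wf_buchi A"
  shows "openin buchi_topology (- lang A)"
proof (subst openin_subopen, intro ballI)
  fix y assume "y \<in> - lang A"
  then obtain L where "omega_regular L" "y \<in> L" "L \<inter> lang A = {}"
    using omega_regular_nbhd_disjoint_lang[OF assms] by blast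
  then show "\<exists>T. openin buchi_topology T \<and> y \<in> T \<and> T \<subseteq> - lang A"
    using openin_buchi_topology_omega_regular by blast
qed

lemma openin_buchi_topology_indistinguishable:
  fixes x :: "nat \<Rightarrow> 'a::finite"
  shows "openin buchi_topology {y. \<forall>A. wf_buchi A \<and> size_buchi A \<le> n \<longrightarrow> \<not> separates A x y}"
proof -
  define \<L> where "\<L> = lang ` {A :: 'a buchi. wf_buchi A \<and> size_buchi A \<le> n}"
  define \<N> where "\<N> = (\<lambda>L. if x \<in> L then L else - L) ` \<L>"
  have not_separates: "\<not> separates A x y \<longleftrightarrow> y \<in> (if x \<in> lang A then lang A else - lang A)" for y A
    by (auto simp: separates_def)
  have "{y. \<forall>A. wf_buchi A \<and> size_buchi A \<le> n \<longrightarrow> \<not> separates A x y} = \<Inter>\<N>"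
    unfolding \<N>_def \<L>_def image_image not_separates by blast
  moreover have "\<N> \<noteq> {}"
  proof -
    have "wf_buchi (\<lparr>states = {}, initial = {}, final = {}, trans = {}\<rparr> :: 'a buchi)"
      and "size_buchi (\<lparr>states = {}, initial = {}, final = {}, trans = {}\<rparr> :: 'a buchi) \<le> n"
      by (simp_all add: wf_buchi_def size_buchi_def)
    then have "{A :: 'a buchi. wf_buchi A \<and> size_buchi A \<le> n} \<noteq> {}"
      by blast
    then show ?thesis
      unfolding \<N>_def \<L>_def image_is_empty .
  qed
  moreover have "openin buchi_topology N" if N: "N \<in> \<N>" for N
  proof -
    obtain L where L: "N = (if x \<in> L then L else - L)" "L \<in> \<L>"
      using N unfolding \<N>_def by (rule imageE)
    obtain A where A: "L = lang A" "A \<in> {A. wf_buchi A \<and> size_buchi A \<le> n}"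
      using L(2) unfolding \<L>_def by (rule imageE)
    then have "omega_regular L"
      by (auto simp: omega_regular_def)
    then show ?thesis
      using A L(1) openin_buchi_topology_omega_regular openin_buchi_topology_Compl_lang by auto
  qed
  moreover have "finite \<N>"
    unfolding \<N>_def \<L>_def by (intro finite_imageI finite_langs_size_le)
  ultimately show ?thesis
    by (simp add: openin_Inter)
qed

lemma mtopology_buchi_dist_eq_buchi_topology:
  "Metric_space.mtopology UNIV buchi_dist = (buchi_topology :: (nat \<Rightarrow> 'a::finite) topology)"
proof -
  interpret M: Metric_space "UNIV :: (nat \<Rightarrow> 'a) set" buchi_dist
    by (rule Metric_space_buchi_dist)
  have "openin M.mtopology U" if "openin buchi_topology U" for U
  proof -
    have "generate_topology_on {L. omega_regular L} U"
      using that unfolding buchi_topology_def openin_topology_generated_by_iff .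
    then show ?thesis
      by (induct rule: generate_topology_on.induct)
        (auto intro: openin_Int openin_Union openin_mtopology_omega_regular)
  qed
  moreover have "openin buchi_topology U" if U: "openin M.mtopology U" for U
  proof (subst openin_subopen, intro ballI)
    fix x assume "x \<in> U"
    then obtain r where r: "0 < r" "M.mball x r \<subseteq> U"
      using U unfolding M.openin_mtopology by blast
    obtain n where n: "2 powr - real n < r"
      using two_powr_neg_less[OF r(1)] .
    let ?N = "{y. \<forall>A. wf_buchi A \<and> size_buchi A \<le> n \<longrightarrow> \<not> separates A x y}"
    have "?N \<subseteq> M.mball x r"
    proof
      fix y assume "y \<in> ?N"
      then have "buchi_dist x y \<le> 2 powr - real (Suc n)"
        by (intro buchi_dist_le_if_no_separator) auto
      also have "\<dots> \<le> 2 powr - real n"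
        by simp
      also have "\<dots> < r"
        by (rule n)
      finally show "y \<in> M.mball x r"
        by simp
    qed
    moreover have "x \<in> ?N"
      by (simp add: separates_def)
    ultimately show "\<exists>T. openin buchi_topology T \<and> x \<in> T \<and> T \<subseteq> U"
      using openin_buchi_topology_indistinguishable[of n x] r(2) by (intro exI[of _ ?N]) auto
  qed
  ultimately show ?thesis
    by (auto simp: topology_eq)
qed

section \<open>Non-completeness\<close>

lemma infinite_shift_iff: "infinite {n::nat. P (n + k)} \<longleftrightarrow> infinite {n. P n}"
  using eventually_sequentially_seg[where P = "\<lambda>n. \<not> P n"]
  by (simp add: frequently_cofinite[symmetric] cofinite_eq_sequentially frequently_def)

definition post :: "('s \<times> 'a \<times> 's) set \<Rightarrow> 'a \<Rightarrow> 's set \<Rightarrow> 's set" where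
  "post T a X = {q. \<exists>p \<in> X. (p, a, q) \<in> T}"

lemma case_nat_in_gen_lang_iff: "case_nat a \<sigma> \<in> gen_lang I F T \<longleftrightarrow> \<sigma> \<in> gen_lang (post T a I) F T"
proof
  assume "case_nat a \<sigma> \<in> gen_lang I F T"
  then obtain r where
    r: "r 0 \<in> I" "\<And>n. (r n, case_nat a \<sigma> n, r (Suc n)) \<in> T" "infinite {n. r n \<in> F}"
    by (auto simp: gen_lang_def)
  have "r 1 \<in> post T a I"
    using r(1) r(2)[of 0] by (auto simp: post_def)
  moreover have "infinite {n. r (n + 1) \<in> F}"
    using r(3) infinite_shift_iff[of "\<lambda>n. r n \<in> F" 1] by simp
  moreover have "(r (Suc n), \<sigma> n, r (Suc (Suc n))) \<in> T" for n
    using r(2)[of "Suc n"] by simp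
  ultimately show "\<sigma> \<in> gen_lang (post T a I) F T"
    unfolding gen_lang_def by (intro CollectI exI[of _ "\<lambda>n. r (Suc n)"]) auto
next
  assume "\<sigma> \<in> gen_lang (post T a I) F T"
  then obtain r where r: "r 0 \<in> post T a I" "\<And>n. (r n, \<sigma> n, r (Suc n)) \<in> T" "infinite {n. r n \<in> F}"
    by (auto simp: gen_lang_def)
  then obtain p where p: "p \<in> I" "(p, a, r 0) \<in> T"
    by (auto simp: post_def)
  have "infinite {n. case_nat p r n \<in> F}"
    using r(3) infinite_shift_iff[of "\<lambda>n. case_nat p r n \<in> F" 1] by simp
  moreover have "(case_nat p r n, case_nat a \<sigma> n, case_nat p r (Suc n)) \<in> T" for n
    using p r(2) by (cases n) auto
  ultimately show "case_nat a \<sigma> \<in> gen_lang I F T"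
    using p(1) unfolding gen_lang_def by (intro CollectI exI[of _ "case_nat p r"]) auto
qed

definition step_word :: "'a \<Rightarrow> 'a \<Rightarrow> nat \<Rightarrow> nat \<Rightarrow> 'a" where
  "step_word a b N i = (if i < N then a else b)"

lemma step_word_in_gen_lang_iff:
  "step_word a b N \<in> gen_lang I F T \<longleftrightarrow> (\<lambda>_. b) \<in> gen_lang ((post T a ^^ N) I) F T"
proof (induct N arbitrary: I)
  case (Suc N)
  have "step_word a b (Suc N) = case_nat a (step_word a b N)"
    by (auto simp: step_word_def split: nat.split)
  then show ?case
    using Suc[of "post T a I"] by (simp add: case_nat_in_gen_lang_iff funpow_swap1)
next
  case 0
  have "step_word a b 0 = (\<lambda>_. b)"
    by (simp add: fun_eq_iff step_word_def)
  then show ?case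
    by simp
qed

lemma funpow_repeats:
  fixes g :: "'b \<Rightarrow> 'b"
  assumes "finite X" "\<And>n. (g ^^ n) x \<in> X"
  obtains i j where "i < j" "j \<le> card X" "(g ^^ i) x = (g ^^ j) x"
proof -
  have "\<not> inj_on (\<lambda>n. (g ^^ n) x) {0..card X}"
  proof
    assume "inj_on (\<lambda>n. (g ^^ n) x) {0..card X}"
    then have "card {0..card X} \<le> card X"
      using assms by (intro card_inj_on_le) auto
    then show False
      by simp
  qed
  then obtain i' j' where ij': "i' \<noteq> j'" "i' \<le> card X" "j' \<le> card X" "(g ^^ i') x = (g ^^ j') x"
    unfolding inj_on_def by auto
  show ?thesis
  proof (cases "i' < j'")
    case False
    then show ?thesis
      using ij' that[of j' i'] by auto
  qed (use ij' that in auto)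
qed

lemma funpow_eventually_periodic:
  fixes g :: "'b \<Rightarrow> 'b"
  assumes "finite X" "\<And>n. (g ^^ n) x \<in> X"
  obtains i p where "0 < p" "p \<le> card X" "i \<le> card X"
    "\<And>n c. i \<le> n \<Longrightarrow> (g ^^ (n + c * p)) x = (g ^^ n) x"
proof -
  obtain i j where ij: "i < j" "j \<le> card X" "(g ^^ i) x = (g ^^ j) x"
    using funpow_repeats[OF assms] .
  define p where "p = j - i"
  have shift: "(g ^^ (m + p)) x = (g ^^ m) x" if "i \<le> m" for m
  proof -
    have "(g ^^ (m - i + j)) x = (g ^^ (m - i)) ((g ^^ j) x)"
      by (simp add: funpow_add)
    also have "\<dots> = (g ^^ (m - i + i)) x"
      by (simp add: funpow_add ij(3))
    finally show ?thesis
      using that ij(1) by (simp add: p_def add.commute)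
  qed
  have "(g ^^ (n + c * p)) x = (g ^^ n) x" if "i \<le> n" for n c
  proof (induct c)
    case (Suc c)
    have "(g ^^ (n + Suc c * p)) x = (g ^^ (n + c * p + p)) x"
      by (simp add: algebra_simps)
    also have "\<dots> = (g ^^ (n + c * p)) x"
      using that by (intro shift) simp
    finally show ?case
      using Suc by simp
  qed simp
  then show ?thesis
    using that[of p i] ij by (simp add: p_def)
qed

lemma funpow_fact_eq:
  fixes g :: "'b \<Rightarrow> 'b"
  assumes "finite X" "\<And>n. (g ^^ n) x \<in> X" "card X \<le> m" "card X \<le> m'"
  shows "(g ^^ fact m) x = (g ^^ fact m') x"
proof -
  obtain i p where p: "0 < p" "p \<le> card X" "i \<le> card X"
    and periodic: "\<And>n c. i \<le> n \<Longrightarrow> (g ^^ (n + c * p)) x = (g ^^ n) x"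
    by (rule funpow_eventually_periodic[OF assms(1,2)]) blast
  have fact_eq: "(g ^^ fact k') x = (g ^^ fact k) x" if "card X \<le> k" "k \<le> k'" for k k'
  proof -
    have "p dvd fact k' - fact k"
      using p that by (intro dvd_diff_nat dvd_fact) auto
    then obtain c where "fact k' - fact k = p * c"
      by (rule dvdE)
    then have "fact k' = fact k + c * p"
      using fact_mono[OF that(2), where 'a = nat] by (metis le_add_diff_inverse mult.commute)
    moreover have "i \<le> fact k"
      using p(3) that(1) fact_ge_self[of k] by linarith
    ultimately show ?thesis
      using periodic by simp
  qed
  show ?thesis
    using assms(3,4) fact_eq[of m m'] fact_eq[of m' m] by (cases "m \<le> m'") auto
qed

lemma step_word_fact_lang_eq:
  assumes A: "wf_buchi A" and m: "2 ^ size_buchi A \<le> m" "2 ^ size_buchi A \<le> m'"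
  shows "step_word a b (fact m) \<in> lang A \<longleftrightarrow> step_word a b (fact m') \<in> lang A"
proof -
  have "(post (trans A) a ^^ n) (initial A) \<in> Pow (states A)" for n
    using A by (induct n) (auto simp: wf_buchi_def post_def)
  moreover have "card (Pow (states A)) = 2 ^ size_buchi A"
    using A by (simp add: wf_buchi_def size_buchi_def card_Pow)
  ultimately have
    "(post (trans A) a ^^ fact m) (initial A) = (post (trans A) a ^^ fact m') (initial A)"
    using A m by (intro funpow_fact_eq[of "Pow (states A)"]) (auto simp: wf_buchi_def)
  then show ?thesis
    by (simp add: lang_eq_gen_lang step_word_in_gen_lang_iff)
qed

lemma buchi_dist_step_word_fact_le:
  assumes n: "2 ^ K \<le> n" "2 ^ K \<le> n'"
  shows "buchi_dist (step_word a b (fact n)) (step_word a b (fact n')) \<le> 2 powr - real (Suc K)"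
proof (rule buchi_dist_le_if_no_separator)
  fix A :: "'a buchi" assume A: "wf_buchi A" "size_buchi A \<le> K"
  have "(2::nat) ^ size_buchi A \<le> 2 ^ K"
    using A(2) by (simp add: power_increasing)
  then have "2 ^ size_buchi A \<le> n" "2 ^ size_buchi A \<le> n'"
    using n by linarith+
  then show "\<not> separates A (step_word a b (fact n)) (step_word a b (fact n'))"
    using step_word_fact_lang_eq[OF A(1), of n n' a b] by (simp add: separates_def)
qed

lemma MCauchy_step_word_fact: "Metric_space.MCauchy UNIV buchi_dist (\<lambda>n. step_word a b (fact n))"
proof -
  interpret M: Metric_space UNIV buchi_dist
    by (rule Metric_space_buchi_dist)
  have "\<exists>N. \<forall>n n'. N \<le> n \<longrightarrow> N \<le> n' \<longrightarrow>
      buchi_dist (step_word a b (fact n)) (step_word a b (fact n')) < \<epsilon>"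
    if "0 < \<epsilon>" for \<epsilon> :: real
  proof -
    obtain K where K: "2 powr - real K < \<epsilon>"
      using two_powr_neg_less[OF \<open>0 < \<epsilon>\<close>] .
    have "buchi_dist (step_word a b (fact n)) (step_word a b (fact n')) < \<epsilon>"
      if "2 ^ K \<le> n" "2 ^ K \<le> n'" for n n' :: nat
    proof -
      have "(2::real) powr - real (Suc K) \<le> 2 powr - real K"
        by simp
      then show ?thesis
        using buchi_dist_step_word_fact_le[OF that, of a b] K by linarith
    qed
    then show ?thesis
      by (intro exI[of _ "2 ^ K"] allI impI)
  qed
  then show ?thesis
    unfolding M.MCauchy_def by simp
qed

lemma not_limitin_if_eventually_separates:
  assumes A: "wf_buchi A" and sep: "\<forall>\<^sub>F n in sequentially. separates A (\<sigma> n) l"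
  shows "\<not> limitin (Metric_space.mtopology UNIV buchi_dist) \<sigma> l sequentially"
proof
  interpret M: Metric_space UNIV buchi_dist
    by (rule Metric_space_buchi_dist)
  assume "limitin M.mtopology \<sigma> l sequentially"
  then have "\<forall>\<^sub>F n in sequentially. buchi_dist (\<sigma> n) l < 2 powr - real (size_buchi A)"
    unfolding M.limitin_metric by simp
  moreover have "\<forall>\<^sub>F n in sequentially. 2 powr - real (size_buchi A) \<le> buchi_dist (\<sigma> n) l"
    using sep by eventually_elim (rule buchi_dist_ge_if_separates[OF A])
  ultimately have "\<forall>\<^sub>F n in sequentially. False"
    by eventually_elim simp
  then show False
    by simp
qed

definition const_buchi :: "'a \<Rightarrow> 'a buchi" where
  "const_buchi a = \<lparr>states = {0}, initial = {0}, final = {0}, trans = {(0, a, 0)}\<rparr>"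

lemma wf_const_buchi: "wf_buchi (const_buchi a)"
  by (auto simp: const_buchi_def wf_buchi_def)

lemma lang_const_buchi: "lang (const_buchi a) = {\<lambda>_. a}"
  by (auto simp: lang_def run_def accepting_def const_buchi_def intro!: exI[of _ "\<lambda>_. 0"])

lemma not_limitin_step_word_fact:
  assumes "a \<noteq> b"
  shows "\<not> limitin (Metric_space.mtopology UNIV buchi_dist) (\<lambda>n. step_word a b (fact n)) l sequentially"
proof (cases "l = (\<lambda>_. a)")
  case True
  have "step_word a b (fact n) \<noteq> (\<lambda>_. a)" for n
  proof
    assume "step_word a b (fact n) = (\<lambda>_. a)"
    then have "step_word a b (fact n) (fact n) = a"
      by simp
    then show False
      using assms by (simp add: step_word_def)
  qed
  then have "separates (const_buchi a) (step_word a b (fact n)) l" for n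
    using True by (simp add: separates_def lang_const_buchi)
  then show ?thesis
    by (intro not_limitin_if_eventually_separates[OF wf_const_buchi[of a]]) simp
next
  case False
  then obtain k where k: "l k \<noteq> a"
    by auto
  have "step_word a b (fact n) k = a" if "k < n" for n
    using that fact_ge_self[of n] by (simp add: step_word_def)
  then have "\<forall>\<^sub>F n in sequentially. separates (letter_buchi k (l k)) (step_word a b (fact n)) l"
    using k unfolding eventually_sequentially
    by (intro exI[of _ "Suc k"]) (auto simp: separates_def lang_letter_buchi)
  then show ?thesis
    by (rule not_limitin_if_eventually_separates[OF wf_letter_buchi])
qed

lemma not_mcomplete_buchi_dist:
  assumes "CARD('a::finite) \<ge> 2"
  shows "\<not> Metric_space.mcomplete (UNIV :: (nat \<Rightarrow> 'a) set) buchi_dist"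
proof -
  have "\<not> CARD('a) \<le> Suc 0"
    using assms by simp
  then obtain a b :: 'a where "a \<noteq> b"
    by (auto simp: card_le_Suc0_iff_eq)
  interpret M: Metric_space "UNIV :: (nat \<Rightarrow> 'a) set" buchi_dist
    by (rule Metric_space_buchi_dist)
  show ?thesis
    unfolding M.mcomplete_def
    using MCauchy_step_word_fact[of a b] not_limitin_step_word_fact[OF \<open>a \<noteq> b\<close>] by blast
qed

theorem proposition3p2:
  assumes "CARD('a::finite) \<ge> 2"
  shows "Metric_space (UNIV :: (nat \<Rightarrow> 'a) set) buchi_dist
       \<and> Metric_space.mtopology (UNIV :: (nat \<Rightarrow> 'a) set) buchi_dist = buchi_topology
       \<and> \<not> Metric_space.mcomplete (UNIV :: (nat \<Rightarrow> 'a) set) (buchi_dist :: (nat \<Rightarrow> 'a) \<Rightarrow> _)"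
  by (intro conjI Metric_space_buchi_dist mtopology_buchi_dist_eq_buchi_topology
      not_mcomplete_buchi_dist[OF assms])

end
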